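(* Let $B$ be a finite set (of "bath spins"), and introduce commuting indeterminates $b_{i,j}=b_{j,i}$ for distinct $i,j\in B$. For every subset $\mathcal S\subseteq B$ let $L_{\mathcal S}$ be a formal power series in the variables $\{b_{i,j}: i,j\in\mathcal S,\ i\neq j\}$ (with complex coefficients, which may depend on additional parameters such as a time $t$) whose constant term is nonzero. Define $\tilde L_{\mathcal S}$ recursively for all $\mathcal S\subseteq B$ by $$\tilde L_{\mathcal S}=L_{\mathcal S}\Big/\prod_{\mathcal C\subsetneq \mathcal S}\tilde L_{\mathcal C},$$ so that $L_{\mathcal S}=\prod_{\mathcal C\subseteq\mathcal S}\tilde L_{\mathcal C}$. Suppose the family $(L_{\mathcal S})$ is factorable under disconnected interactions, i.e. for every $\mathcal S\subseteq B$ and all subsets $\mathcal X,\mathcal Y\subseteq\mathcal S$ with $\mathcal X\cup\mathcal Y=\mathcal S$ and $\mathcal X\cap\mathcal Y=\emptyset$, setting $b_{i,j}=0$ for all $i\in\mathcal X$, $j\in\mathcal Y$ in $L_{\mathcal S}$ yields $L_{\mathcal X}L_{\mathcal Y}$. Then for every $\mathcal C\subseteq B$, every non-constant monomial appearing (with nonzero coefficient) in the power series $\tilde L_{\mathcal C}$ has the following property: the graph with vertex set $\mathcal C$ and with an edge $\{i,j\}$ for each variable $b_{i,j}$ occurring in that monomial is connected. Equivalently, no non-constant term of $\tilde L_{\mathcal C}$ can be factored into parts involving disjoint non-empty sets of spins of $\mathcal C$.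
   Context: The quotient and products are taken in the ring of formal power series; they are well defined because every $L_{\mathcal S}$, and hence every $\tilde L_{\mathcal S}$, has nonzero constant term and is thus invertible. Since $L_{\mathcal S}$ involves only variables indexed by pairs in $\mathcal S$, setting the cross variables to zero gives a series in variables indexed within $\mathcal X$ and within $\mathcal Y$, which is compared with the product $L_{\mathcal X}L_{\mathcal Y}$. *)

theory Defs
  imports Complex_Main "HOL-Library.Poly_Mapping" "HOL-Library.FuncSet"
begin

text \<open>The indeterminate b_{i,j} is
  represented by the two-element set {i,j}; a monomial is a finitely supported
  exponent vector (a poly_mapping into nat); a series is its coefficient function.\<close>

type_synonym 'a mono = "'a set \<Rightarrow>\<^sub>0 nat"
type_synonym 'a mfps = "'a mono \<Rightarrow> complex"

definition pair_vars :: "'a set \<Rightarrow> 'a set set" where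
  "pair_vars S = {{i, j} | i j. i \<in> S \<and> j \<in> S \<and> i \<noteq> j}"

definition mfps_mult :: "'a mfps \<Rightarrow> 'a mfps \<Rightarrow> 'a mfps" where
  "mfps_mult f g m = (\<Sum>(p, q) \<in> {(p, q). p + q = m}. f p * g q)"

definition mfps_prod :: "'i set \<Rightarrow> ('i \<Rightarrow> 'a mfps) \<Rightarrow> 'a mfps" where
  "mfps_prod I F m =
     (\<Sum>h \<in> {h. h \<in> I \<rightarrow>\<^sub>E UNIV \<and> (\<Sum>i\<in>I. h i) = m}. \<Prod>i\<in>I. F i (h i))"

definition kill_cross :: "'a set \<Rightarrow> 'a set \<Rightarrow> 'a mfps \<Rightarrow> 'a mfps" where
  "kill_cross X Y f m = (if \<exists>i\<in>X. \<exists>j\<in>Y. {i, j} \<in> Poly_Mapping.keys m then 0 else f m)"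

definition graph_connected :: "'a set \<Rightarrow> 'a set set \<Rightarrow> bool" where
  "graph_connected C E \<longleftrightarrow>
     (\<forall>x\<in>C. \<forall>y\<in>C. (\<lambda>u v. u \<in> C \<and> v \<in> C \<and> u \<noteq> v \<and> {u, v} \<in> E)\<^sup>*\<^sup>* x y)"

end

theory Submission
  imports Defs
begin

text \<open>Write \<open>L\<close> for the given series and \<open>Lt\<close> for the cluster series, so that
  \<open>L C = Lt C * (\<Prod>D\<subset>C. Lt D)\<close>. All these series have nonzero constant term and can
  be cancelled, and both claims follow by strong induction on \<open>C\<close>.

  Restricting a series to the monomials in the variables of \<open>C\<close> is multiplicative; it fixes
  \<open>L C\<close> and, inductively, every \<open>Lt D\<close> with \<open>D \<subset> C\<close>, hence also \<open>Lt C\<close>.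

  For connectedness fix a cut \<open>C = X \<union> Y\<close>. Deleting the variables across the cut is also
  multiplicative and fixes every \<open>Lt D\<close> with \<open>D \<subseteq> X\<close> or \<open>D \<subseteq> Y\<close>. Comparing the
  factorisation of \<open>L C\<close> with \<open>L X * L Y\<close> shows that the product of the truncated \<open>Lt D\<close>
  over the clusters \<open>D\<close> meeting both sides is constant. Inductively each such \<open>D \<subset> C\<close>
  contributes a constant, so the truncation of \<open>Lt C\<close> is constant as well. A non-constant
  monomial of \<open>Lt C\<close> with disconnected graph would survive the truncation along a cut
  separating one of its components.\<close>

lemma keys_add_monomial: "Poly_Mapping.keys (p + q :: 'a mono) = Poly_Mapping.keys p \<union> Poly_Mapping.keys q"
  by (auto simp: in_keys_iff lookup_add)

definition total_degree :: "'a mono \<Rightarrow> nat" where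
  "total_degree m = (\<Sum>k\<in>Poly_Mapping.keys m. Poly_Mapping.lookup m k)"

lemma total_degree_add: "total_degree (p + q) = total_degree p + total_degree q"
  unfolding total_degree_def by (rule setsum_keys_plus_distrib) auto

lemma total_degree_eq_0_iff: "total_degree m = 0 \<longleftrightarrow> m = 0"
  unfolding total_degree_def by (auto simp: in_keys_iff poly_mapping_eqI)

lemma mono_add_eq_0_iff: "p + q = (0 :: 'a mono) \<longleftrightarrow> p = 0 \<and> q = 0"
proof
  assume "p + q = 0"
  then have "total_degree p + total_degree q = 0"
    by (simp add: total_degree_add[symmetric] total_degree_eq_0_iff)
  then show "p = 0 \<and> q = 0"
    by (simp add: total_degree_eq_0_iff)
qed simp

lemma finite_summands: "finite {p. \<exists>q. p + q = (m :: 'a mono)}"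
proof -
  let ?K = "Poly_Mapping.keys m"
  let ?g = "\<lambda>p :: 'a mono. restrict (Poly_Mapping.lookup p) ?K"
  have lookup_outside: "Poly_Mapping.lookup p k = 0" if "p + q = m" "k \<notin> ?K" for p q k
  proof -
    from that have "Poly_Mapping.lookup p k + Poly_Mapping.lookup q k = 0"
      by (auto simp: in_keys_iff lookup_add)
    then show ?thesis
      by simp
  qed
  have "inj_on ?g {p. \<exists>q. p + q = m}"
  proof (rule inj_onI, rule poly_mapping_eqI)
    fix p1 p2 k
    assume p1: "p1 \<in> {p. \<exists>q. p + q = m}" and p2: "p2 \<in> {p. \<exists>q. p + q = m}" and eq: "?g p1 = ?g p2"
    show "Poly_Mapping.lookup p1 k = Poly_Mapping.lookup p2 k"
    proof (cases "k \<in> ?K")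
      case True
      then show ?thesis
        using fun_cong[OF eq, of k] by simp
    next
      case False
      then show ?thesis
        using p1 p2 lookup_outside by auto
    qed
  qed
  moreover have "?g ` {p. \<exists>q. p + q = m} \<subseteq> (\<Pi>\<^sub>E k\<in>?K. {0..Poly_Mapping.lookup m k})"
    by (auto simp: lookup_add)
  then have "finite (?g ` {p. \<exists>q. p + q = m})"
    by (rule finite_subset) (auto intro!: finite_PiE)
  ultimately show ?thesis
    using finite_imageD by blast
qed

lemma finite_splittings: "finite {(p, q). p + q = (m :: 'a mono)}"
proof (rule finite_subset)
  show "{(p, q). p + q = m} \<subseteq> {p. \<exists>q. p + q = m} \<times> {p. \<exists>q. p + q = m}"
    by (clarsimp, rule exI, rule add.commute)
qed (intro finite_SigmaI finite_summands)

definition decompositions :: "'i set \<Rightarrow> 'a mono \<Rightarrow> ('i \<Rightarrow> 'a mono) set" where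
  "decompositions I m = {h. h \<in> I \<rightarrow>\<^sub>E UNIV \<and> (\<Sum>i\<in>I. h i) = m}"

lemma finite_decompositions:
  assumes "finite I"
  shows "finite (decompositions I m)"
proof (rule finite_subset)
  show "decompositions I m \<subseteq> (\<Pi>\<^sub>E i\<in>I. {p. \<exists>q. p + q = m})"
  proof
    fix h assume h: "h \<in> decompositions I m"
    have "h i + (\<Sum>j\<in>I - {i}. h j) = m" if "i \<in> I" for i
      using h that assms by (simp add: decompositions_def sum.remove)
    then show "h \<in> (\<Pi>\<^sub>E i\<in>I. {p. \<exists>q. p + q = m})"
      using h by (auto simp: decompositions_def)
  qed
qed (intro finite_PiE assms finite_summands)

lemma mfps_prod_altdef: "mfps_prod I F m = (\<Sum>h\<in>decompositions I m. \<Prod>i\<in>I. F i (h i))"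
  by (simp add: mfps_prod_def decompositions_def)

lemma decompositions_merge:
  fixes h1 h2 :: "'i \<Rightarrow> 'a mono"
  assumes "finite A" "finite B" "A \<inter> B = {}"
    and h1: "h1 \<in> decompositions A p" and h2: "h2 \<in> decompositions B q"
  defines "h \<equiv> \<lambda>i. if i \<in> A then h1 i else h2 i"
  shows "h \<in> decompositions (A \<union> B) (p + q)"
    and "restrict h A = h1" "restrict h B = h2" "sum h A = p" "sum h B = q"
proof -
  have on_A: "h i = h1 i" if "i \<in> A" for i
    using that by (simp add: h_def)
  have on_B: "h i = h2 i" if "i \<in> B" for i
    using that assms(3) by (auto simp: h_def)
  have "h1 \<in> extensional A" "h2 \<in> extensional B"
    using h1 h2 by (simp_all add: decompositions_def PiE_def)
  moreover have "restrict h A = restrict h1 A" "restrict h B = restrict h2 B"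
    using on_A on_B by (auto intro: restrict_ext)
  ultimately show "restrict h A = h1" "restrict h B = h2"
    by (simp_all add: extensional_restrict)
  have "sum h A = sum h1 A" "sum h B = sum h2 B"
    using on_A on_B by (auto intro: sum.cong)
  then show "sum h A = p" "sum h B = q"
    using h1 h2 by (simp_all add: decompositions_def)
  moreover have "h \<in> (A \<union> B) \<rightarrow>\<^sub>E UNIV"
    using h2 by (auto simp: h_def decompositions_def PiE_iff extensional_def)
  ultimately show "h \<in> decompositions (A \<union> B) (p + q)"
    using assms(1-3) by (simp add: decompositions_def sum.union_disjoint)
qed

lemma decompositions_split:
  fixes h :: "'i \<Rightarrow> 'a mono"
  assumes "finite A" "finite B" "A \<inter> B = {}" and h: "h \<in> decompositions (A \<union> B) m"
  shows "restrict h A \<in> decompositions A (sum h A)" "restrict h B \<in> decompositions B (sum h B)"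
    and "sum h A + sum h B = m" "(\<lambda>i. if i \<in> A then restrict h A i else restrict h B i) = h"
proof -
  have "sum (restrict h I) I = sum h I" for I
    by (rule sum.cong) auto
  then show "restrict h A \<in> decompositions A (sum h A)" "restrict h B \<in> decompositions B (sum h B)"
    by (simp_all add: decompositions_def)
  show "sum h A + sum h B = m"
    using assms by (simp add: decompositions_def sum.union_disjoint)
  show "(\<lambda>i. if i \<in> A then restrict h A i else restrict h B i) = h"
    using h by (auto simp: decompositions_def PiE_def extensional_def)
qed

lemma decompositions_union_bij:
  fixes A B :: "'i set" and m :: "'a mono"
  assumes "finite A" "finite B" "A \<inter> B = {}"
  defines "separate \<equiv> \<lambda>h. ((sum h A, sum h B), restrict h A, restrict h B)"
  shows "bij_betw separate (decompositions (A \<union> B) m)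
           (Sigma {(p, q). p + q = m} (\<lambda>x. decompositions A (fst x) \<times> decompositions B (snd x)))"
    (is "bij_betw _ ?D ?\<Sigma>")
proof -
  define merge :: "('a mono \<times> 'a mono) \<times> ('i \<Rightarrow> 'a mono) \<times> ('i \<Rightarrow> 'a mono) \<Rightarrow> 'i \<Rightarrow> 'a mono"
    where "merge = (\<lambda>((p, q), h1, h2) i. if i \<in> A then h1 i else h2 i)"
  have merge_separate: "merge (separate h) = h" if "h \<in> ?D" for h
    using decompositions_split(4)[OF assms(1-3) that] by (simp add: merge_def separate_def)
  have separate_merge: "separate (merge z) = z \<and> merge z \<in> ?D" if "z \<in> ?\<Sigma>" for z
  proof -
    from that obtain p q h1 h2 where z: "z = ((p, q), h1, h2)" "p + q = m"
      and h1: "h1 \<in> decompositions A p" and h2: "h2 \<in> decompositions B q"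
      by auto
    show ?thesis
      using decompositions_merge[OF assms(1-3) h1 h2] z by (simp add: merge_def separate_def)
  qed
  have separate_in: "separate h \<in> ?\<Sigma>" if "h \<in> ?D" for h
    using decompositions_split(1-3)[OF assms(1-3) that] by (simp add: separate_def)
  show ?thesis
    by (rule bij_betw_byWitness[where f' = merge]) (use merge_separate separate_merge separate_in in blast)+
qed

definition mfps_const :: "complex \<Rightarrow> 'a mfps" where
  "mfps_const c m = (if m = 0 then c else 0)"

lemma mfps_mult_0: "mfps_mult f g 0 = f 0 * g 0"
proof -
  have "{(p, q). p + q = (0 :: 'a mono)} = {(0, 0)}"
    by (auto simp: mono_add_eq_0_iff)
  then show ?thesis
    by (simp add: mfps_mult_def)
qed

lemma mfps_mult_remove_0:
  "mfps_mult f g m = f m * g 0 + (\<Sum>(p, q)\<in>{(p, q). p + q = m} - {(m, 0)}. f p * g q)"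
  unfolding mfps_mult_def by (subst sum.remove[OF finite_splittings, of "(m, 0)"]) auto

lemma mfps_mult_commute: "mfps_mult f g = mfps_mult g f"
  unfolding mfps_mult_def
  by (rule ext, rule sum.reindex_bij_witness[of _ prod.swap prod.swap]) (auto simp: add.commute)

lemma mfps_mult_const_right: "mfps_mult f (mfps_const c) = (\<lambda>m. c * f m)"
  by (rule ext, subst mfps_mult_remove_0)
    (auto simp: mfps_const_def split: if_splits intro!: sum.neutral)

lemma mfps_mult_const_left: "mfps_mult (mfps_const c) f = (\<lambda>m. c * f m)"
  by (simp add: mfps_mult_commute[of "mfps_const c"] mfps_mult_const_right)

lemma mfps_mult_scale_right: "mfps_mult f (\<lambda>m. c * g m) = (\<lambda>m. c * mfps_mult f g m)"
  unfolding mfps_mult_def by (simp add: sum_distrib_left case_prod_beta mult.left_commute)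

lemma mfps_mult_right_cancel:
  assumes eq: "mfps_mult f h = mfps_mult g h" and h0: "h 0 \<noteq> 0"
  shows "f = g"
proof
  fix m
  show "f m = g m"
  proof (induction "total_degree m" arbitrary: m rule: less_induct)
    case less
    have smaller: "f p = g p" if "p + q = m" "(p, q) \<noteq> (m, 0)" for p q
    proof -
      from that have "q \<noteq> 0"
        by auto
      then have "total_degree p < total_degree m"
        using that(1) total_degree_add[of p q] total_degree_eq_0_iff[of q] by simp
      then show ?thesis
        by (rule less)
    qed
    then have "(\<Sum>(p, q)\<in>{(p, q). p + q = m} - {(m, 0)}. f p * h q) =
               (\<Sum>(p, q)\<in>{(p, q). p + q = m} - {(m, 0)}. g p * h q)"
      by (intro sum.cong refl) (use smaller in fastforce)
    moreover have "mfps_mult f h m = mfps_mult g h m"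
      using eq by simp
    ultimately have "f m * h 0 = g m * h 0"
      by (simp add: mfps_mult_remove_0)
    with h0 show ?case
      by simp
  qed
qed

lemma mfps_prod_cong: "(\<And>i. i \<in> I \<Longrightarrow> F i = G i) \<Longrightarrow> mfps_prod I F = mfps_prod I G"
  unfolding mfps_prod_def by (intro ext sum.cong refl prod.cong) auto

lemma mfps_prod_empty: "mfps_prod {} F = mfps_const 1"
proof
  fix m :: "'a mono"
  have decompositions_empty: "decompositions {} m = (if m = 0 then {\<lambda>_. undefined} else {})"
    by (auto simp: decompositions_def)
  show "mfps_prod {} F m = mfps_const 1 m"
    unfolding mfps_prod_altdef decompositions_empty by (simp add: mfps_const_def)
qed

lemma mfps_prod_singleton: "mfps_prod {a} F = F a"
proof
  fix m :: "'a mono"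
  have "decompositions {a} m = {(\<lambda>i. if i = a then m else undefined)}"
    by (auto simp: decompositions_def PiE_def extensional_def)
  then show "mfps_prod {a} F m = F a m"
    by (simp add: mfps_prod_altdef)
qed

lemma mfps_prod_union:
  fixes F :: "'i \<Rightarrow> 'a mfps"
  assumes "finite A" "finite B" "A \<inter> B = {}"
  shows "mfps_prod (A \<union> B) F = mfps_mult (mfps_prod A F) (mfps_prod B F)"
proof
  fix m :: "'a mono"
  let ?S = "Sigma {(p, q). p + q = m} (\<lambda>x. decompositions A (fst x) \<times> decompositions B (snd x))"
  let ?G = "\<lambda>z. (\<Prod>i\<in>A. F i (fst z i)) * (\<Prod>i\<in>B. F i (snd z i))"
  have "mfps_mult (mfps_prod A F) (mfps_prod B F) m =
      (\<Sum>x\<in>{(p, q). p + q = m}. \<Sum>z\<in>decompositions A (fst x) \<times> decompositions B (snd x). ?G z)"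
    by (simp add: mfps_mult_def mfps_prod_altdef sum_product sum.cartesian_product case_prod_beta)
  also have "\<dots> = (\<Sum>(x, z)\<in>?S. ?G z)"
    using assms by (intro sum.Sigma) (auto simp: finite_splittings finite_decompositions)
  also have "\<dots> = (\<Sum>h\<in>decompositions (A \<union> B) m. ?G (restrict h A, restrict h B))"
    using sum.reindex_bij_betw[OF decompositions_union_bij[OF assms], of "\<lambda>(x, z). ?G z"] by simp
  also have "\<dots> = mfps_prod (A \<union> B) F m"
    unfolding mfps_prod_altdef
  proof (intro sum.cong refl)
    have restrict_prod: "(\<Prod>i\<in>I. F i (restrict h I i)) = (\<Prod>i\<in>I. F i (h i))" for h I
      by (rule prod.cong) auto
    fix h
    show "?G (restrict h A, restrict h B) = (\<Prod>i\<in>A \<union> B. F i (h i))"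
      unfolding fst_conv snd_conv restrict_prod using assms by (rule prod.union_disjoint[symmetric])
  qed
  finally show "mfps_prod (A \<union> B) F m = mfps_mult (mfps_prod A F) (mfps_prod B F) m" ..
qed

lemma mfps_prod_insert:
  assumes "finite I" "a \<notin> I"
  shows "mfps_prod (insert a I) F = mfps_mult (F a) (mfps_prod I F)"
  using mfps_prod_union[of "{a}" I F] assms by (simp add: mfps_prod_singleton)

lemma mfps_prod_0: "finite I \<Longrightarrow> mfps_prod I F 0 = (\<Prod>i\<in>I. F i 0)"
  by (induction I rule: finite_induct) (simp_all add: mfps_prod_empty mfps_const_def mfps_prod_insert mfps_mult_0)

lemma mfps_prod_const:
  assumes "finite I" "\<And>i. i \<in> I \<Longrightarrow> F i = mfps_const (c i)"
  shows "mfps_prod I F = mfps_const (\<Prod>i\<in>I. c i)"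
  using assms
proof (induction I rule: finite_induct)
  case empty
  then show ?case by (simp add: mfps_prod_empty)
next
  case (insert a I)
  then have "mfps_prod (insert a I) F = mfps_mult (mfps_const (c a)) (mfps_const (\<Prod>i\<in>I. c i))"
    by (simp add: mfps_prod_insert)
  with insert show ?case
    by (auto simp: mfps_mult_const_left mfps_const_def)
qed

definition mfps_filter :: "('a mono \<Rightarrow> bool) \<Rightarrow> 'a mfps \<Rightarrow> 'a mfps" where
  "mfps_filter Q f m = (if Q m then f m else 0)"

lemma mfps_filter_eq_self_iff: "mfps_filter Q f = f \<longleftrightarrow> (\<forall>m. f m \<noteq> 0 \<longrightarrow> Q m)"
  by (auto simp: mfps_filter_def fun_eq_iff)

lemma mfps_filter_mult:
  assumes "\<And>p q. Q (p + q) \<longleftrightarrow> Q p \<and> Q q"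
  shows "mfps_filter Q (mfps_mult f g) = mfps_mult (mfps_filter Q f) (mfps_filter Q g)"
proof
  fix m
  show "mfps_filter Q (mfps_mult f g) m = mfps_mult (mfps_filter Q f) (mfps_filter Q g) m"
  proof (cases "Q m")
    case True
    then show ?thesis
      using assms by (auto simp: mfps_filter_def mfps_mult_def intro!: sum.cong)
  next
    case False
    then have "mfps_mult (mfps_filter Q f) (mfps_filter Q g) m = 0"
      using assms unfolding mfps_mult_def by (intro sum.neutral) (auto simp: mfps_filter_def)
    with False show ?thesis
      by (simp add: mfps_filter_def)
  qed
qed

lemma mfps_filter_prod:
  assumes "\<And>p q. Q (p + q) \<longleftrightarrow> Q p \<and> Q q" "Q 0" "finite I"
  shows "mfps_filter Q (mfps_prod I F) = mfps_prod I (\<lambda>i. mfps_filter Q (F i))"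
  using assms(3)
proof (induction I rule: finite_induct)
  case empty
  show ?case
    using assms(2) by (auto simp: mfps_prod_empty mfps_filter_def mfps_const_def)
next
  case (insert a I)
  then show ?case
    by (simp add: mfps_prod_insert mfps_filter_mult[OF assms(1)])
qed

lemma mfps_filter_mult_cancel:
  assumes "\<And>p q. Q (p + q) \<longleftrightarrow> Q p \<and> Q q"
    and "mfps_filter Q g = g" "g 0 \<noteq> 0" "mfps_filter Q (mfps_mult f g) = mfps_mult f g"
  shows "mfps_filter Q f = f"
proof (rule mfps_mult_right_cancel)
  show "mfps_mult (mfps_filter Q f) g = mfps_mult f g"
    using mfps_filter_mult[OF assms(1), of f g] assms(2,4) by simp
qed (fact assms(3))

lemma pair_vars_mono: "D \<subseteq> C \<Longrightarrow> pair_vars D \<subseteq> pair_vars C"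
  unfolding pair_vars_def by blast

lemma pair_vars_memD: "{i, j} \<in> pair_vars D \<Longrightarrow> i \<in> D \<and> j \<in> D"
  unfolding pair_vars_def by (auto simp: doubleton_eq_iff)

definition cross_free :: "'a set \<Rightarrow> 'a set \<Rightarrow> 'a mono \<Rightarrow> bool" where
  "cross_free X Y m \<longleftrightarrow> (\<forall>i\<in>X. \<forall>j\<in>Y. {i, j} \<notin> Poly_Mapping.keys m)"

lemma cross_free_add: "cross_free X Y (p + q) \<longleftrightarrow> cross_free X Y p \<and> cross_free X Y q"
  by (auto simp: cross_free_def keys_add_monomial)

lemma kill_cross_eq_filter: "kill_cross X Y = mfps_filter (cross_free X Y)"
  by (auto simp: kill_cross_def mfps_filter_def cross_free_def fun_eq_iff)

lemma kill_cross_mult: "kill_cross X Y (mfps_mult f g) = mfps_mult (kill_cross X Y f) (kill_cross X Y g)"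
  unfolding kill_cross_eq_filter by (rule mfps_filter_mult) (rule cross_free_add)

lemma kill_cross_prod:
  "finite I \<Longrightarrow> kill_cross X Y (mfps_prod I F) = mfps_prod I (\<lambda>i. kill_cross X Y (F i))"
  unfolding kill_cross_eq_filter by (rule mfps_filter_prod[OF cross_free_add]) (simp_all add: cross_free_def)

lemma kill_cross_0: "kill_cross X Y f 0 = f 0"
  by (simp add: kill_cross_def)

lemma kill_cross_restrict:
  assumes "\<And>m. f m \<noteq> 0 \<Longrightarrow> Poly_Mapping.keys m \<subseteq> pair_vars D"
  shows "kill_cross X Y f = kill_cross (X \<inter> D) (Y \<inter> D) f"
  unfolding kill_cross_def fun_eq_iff using assms pair_vars_memD by fastforce

lemma kill_cross_eq_self:
  assumes "\<And>m. f m \<noteq> 0 \<Longrightarrow> Poly_Mapping.keys m \<subseteq> pair_vars D" "D \<inter> X = {} \<or> D \<inter> Y = {}"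
  shows "kill_cross X Y f = f"
proof -
  have "kill_cross X Y f = kill_cross (X \<inter> D) (Y \<inter> D) f"
    by (rule kill_cross_restrict[OF assms(1)])
  also have "\<dots> = f"
    using assms(2) by (auto simp: kill_cross_def fun_eq_iff Int_commute)
  finally show ?thesis .
qed

lemma not_graph_connected_cut:
  assumes "\<not> graph_connected C E"
  obtains X Y where "X \<union> Y = C" "X \<inter> Y = {}" "X \<noteq> {}" "Y \<noteq> {}"
    and "\<And>i j. i \<in> X \<Longrightarrow> j \<in> Y \<Longrightarrow> {i, j} \<notin> E"
proof -
  let ?r = "\<lambda>u v. u \<in> C \<and> v \<in> C \<and> u \<noteq> v \<and> {u, v} \<in> E"
  from assms obtain x y where xy: "x \<in> C" "y \<in> C" "\<not> ?r\<^sup>*\<^sup>* x y"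
    unfolding graph_connected_def by blast
  define X where "X = {v \<in> C. ?r\<^sup>*\<^sup>* x v}"
  have "{i, j} \<notin> E" if "i \<in> X" "j \<in> C - X" for i j
  proof
    assume "{i, j} \<in> E"
    with that have "?r\<^sup>*\<^sup>* x j"
      by (auto simp: X_def intro: rtranclp.rtrancl_into_rtrancl)
    with that show False
      by (simp add: X_def)
  qed
  moreover have "x \<in> X" "y \<in> C - X"
    using xy by (auto simp: X_def)
  ultimately show ?thesis
    by (intro that[of X "C - X"]) (auto simp: X_def)
qed

lemma graph_connected_if_kill_cross_const:
  assumes "\<And>X Y. X \<union> Y = C \<Longrightarrow> X \<inter> Y = {} \<Longrightarrow> X \<noteq> {} \<Longrightarrow> Y \<noteq> {} \<Longrightarrow>
             kill_cross X Y f = mfps_const (f 0)"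
    and "m \<noteq> 0" "f m \<noteq> 0"
  shows "graph_connected C (Poly_Mapping.keys m)"
proof (rule ccontr)
  assume "\<not> graph_connected C (Poly_Mapping.keys m)"
  then obtain X Y where cut: "X \<union> Y = C" "X \<inter> Y = {}" "X \<noteq> {}" "Y \<noteq> {}"
    and no_edge: "\<And>i j. i \<in> X \<Longrightarrow> j \<in> Y \<Longrightarrow> {i, j} \<notin> Poly_Mapping.keys m"
    by (rule not_graph_connected_cut) blast
  from no_edge have "kill_cross X Y f m = f m"
    by (auto simp: kill_cross_def)
  moreover have "kill_cross X Y f m = 0"
    using assms(1)[OF cut] assms(2) by (simp add: mfps_const_def)
  ultimately show False
    using assms(3) by simp
qed

definition crossing_subsets :: "'a set \<Rightarrow> 'a set \<Rightarrow> 'a set set" where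
  "crossing_subsets X Y = {D. D \<subseteq> X \<union> Y \<and> D \<inter> X \<noteq> {} \<and> D \<inter> Y \<noteq> {}}"

lemma Pow_Un_crossing_subsets:
  "Pow (X \<union> Y) = crossing_subsets X Y \<union> (Pow X \<union> (Pow Y - {{}}))"
  by (auto simp: crossing_subsets_def)

lemma finite_crossing_subsets: "finite (X \<union> Y) \<Longrightarrow> finite (crossing_subsets X Y)"
  by (rule finite_subset[of _ "Pow (X \<union> Y)"]) (auto simp: crossing_subsets_def)

locale factorable_family =
  fixes B :: "'a set" and L Lt :: "'a set \<Rightarrow> 'a mfps"
  assumes finite_B: "finite B"
    and L_vars: "\<And>S m. S \<subseteq> B \<Longrightarrow> L S m \<noteq> 0 \<Longrightarrow> Poly_Mapping.keys m \<subseteq> pair_vars S"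
    and L_0: "\<And>S. S \<subseteq> B \<Longrightarrow> L S 0 \<noteq> 0"
    and L_eq_prod_Lt: "\<And>S. S \<subseteq> B \<Longrightarrow> L S = mfps_prod (Pow S) Lt"
    and L_factor: "\<And>S X Y. S \<subseteq> B \<Longrightarrow> X \<union> Y = S \<Longrightarrow> X \<inter> Y = {} \<Longrightarrow>
                     kill_cross X Y (L S) = mfps_mult (L X) (L Y)"
begin

lemma Lt_0_nonzero: "C \<subseteq> B \<Longrightarrow> Lt C 0 \<noteq> 0"
  using L_0[of C] L_eq_prod_Lt[of C] finite_subset[OF _ finite_B, of C]
  by (auto simp: mfps_prod_0)

lemma mfps_prod_Lt_0_nonzero: "I \<subseteq> Pow B \<Longrightarrow> mfps_prod I Lt 0 \<noteq> 0"
  using finite_subset[of I "Pow B"] finite_B Lt_0_nonzero by (auto simp: mfps_prod_0)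

lemma L_eq_Lt_mult: "C \<subseteq> B \<Longrightarrow> L C = mfps_mult (Lt C) (mfps_prod (Pow C - {C}) Lt)"
  using L_eq_prod_Lt[of C] mfps_prod_insert[of "Pow C - {C}" C Lt] finite_subset[OF _ finite_B, of C]
  by (simp add: insert_absorb)

lemma Lt_vars:
  assumes "C \<subseteq> B" "Lt C m \<noteq> 0"
  shows "Poly_Mapping.keys m \<subseteq> pair_vars C"
  using finite_subset[OF assms(1) finite_B] assms
proof (induction C arbitrary: m rule: finite_psubset_induct)
  case (psubset C)
  let ?Q = "\<lambda>m :: 'a mono. Poly_Mapping.keys m \<subseteq> pair_vars C"
  let ?R = "mfps_prod (Pow C - {C}) Lt"
  have Q_add: "?Q (p + q) \<longleftrightarrow> ?Q p \<and> ?Q q" for p q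
    by (auto simp: keys_add_monomial)
  have "mfps_filter ?Q (Lt D) = Lt D" if "D \<in> Pow C - {C}" for D
  proof -
    from that psubset.prems(1) have "D \<subset> C" "D \<subseteq> B"
      by auto
    then have "Lt D m \<noteq> 0 \<Longrightarrow> Poly_Mapping.keys m \<subseteq> pair_vars D" for m
      by (rule psubset.IH)
    with pair_vars_mono[of D C] \<open>D \<subset> C\<close> show ?thesis
      by (auto simp: mfps_filter_eq_self_iff)
  qed
  then have "mfps_prod (Pow C - {C}) (\<lambda>D. mfps_filter ?Q (Lt D)) = ?R"
    by (rule mfps_prod_cong)
  then have "mfps_filter ?Q ?R = ?R"
    using psubset.hyps by (simp add: mfps_filter_prod[OF Q_add])
  moreover have "?R 0 \<noteq> 0"
    using psubset.prems(1) by (intro mfps_prod_Lt_0_nonzero) auto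
  moreover have "mfps_filter ?Q (mfps_mult (Lt C) ?R) = mfps_mult (Lt C) ?R"
    using L_vars[OF psubset.prems(1)] L_eq_Lt_mult[OF psubset.prems(1)]
    by (simp add: mfps_filter_eq_self_iff)
  ultimately have "mfps_filter ?Q (Lt C) = Lt C"
    by (rule mfps_filter_mult_cancel[OF Q_add])
  with psubset.prems(2) show ?case
    by (auto simp: mfps_filter_eq_self_iff)
qed

lemma Lt_empty: "Lt {} = mfps_const (Lt {} 0)"
  using Lt_vars[of "{}"] by (auto simp: mfps_const_def pair_vars_def fun_eq_iff)

lemma L_eq_mult_nonempty:
  assumes "Y \<subseteq> B"
  shows "L Y = (\<lambda>m. Lt {} 0 * mfps_prod (Pow Y - {{}}) Lt m)"
proof -
  have "finite (Pow Y - {{}})"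
    using finite_subset[OF assms finite_B] by simp
  then have "mfps_prod (insert {} (Pow Y - {{}})) Lt = mfps_mult (Lt {}) (mfps_prod (Pow Y - {{}}) Lt)"
    by (rule mfps_prod_insert) simp
  moreover have "insert {} (Pow Y - {{}}) = Pow Y"
    by blast
  moreover obtain c where "Lt {} = mfps_const c"
    \<comment> \<open>naming the constant stops the simplifier from rewriting \<open>Lt {}\<close> inside \<open>Lt {} 0\<close>\<close>
    using Lt_empty by blast
  ultimately show ?thesis
    using L_eq_prod_Lt[OF assms] by (simp add: mfps_mult_const_left mfps_const_def)
qed

lemma L_eq_mult_crossing:
  assumes "X \<union> Y \<subseteq> B" "X \<inter> Y = {}"
  shows "L (X \<union> Y) = mfps_mult (mfps_prod (crossing_subsets X Y) Lt)
                        (mfps_mult (L X) (mfps_prod (Pow Y - {{}}) Lt))"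
proof -
  have fin: "finite (X \<union> Y)"
    using assms(1) finite_B by (rule finite_subset)
  then have "finite (crossing_subsets X Y)"
    by (rule finite_crossing_subsets)
  moreover have "crossing_subsets X Y \<inter> (Pow X \<union> (Pow Y - {{}})) = {}"
    using assms(2) by (auto simp: crossing_subsets_def)
  moreover have "Pow X \<inter> (Pow Y - {{}}) = {}"
    using assms(2) by auto
  ultimately have "mfps_prod (Pow (X \<union> Y)) Lt = mfps_mult (mfps_prod (crossing_subsets X Y) Lt)
                    (mfps_mult (mfps_prod (Pow X) Lt) (mfps_prod (Pow Y - {{}}) Lt))"
    using fin by (simp add: Pow_Un_crossing_subsets mfps_prod_union)
  then show ?thesis
    using assms(1) L_eq_prod_Lt[of "X \<union> Y"] L_eq_prod_Lt[of X] by simp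
qed

lemma prod_crossing_kill_cross_const:
  assumes "X \<union> Y \<subseteq> B" "X \<inter> Y = {}"
  shows "mfps_prod (crossing_subsets X Y) (\<lambda>D. kill_cross X Y (Lt D)) = mfps_const (Lt {} 0)"
proof -
  let ?PY = "Pow Y - {{}}"
  let ?W = "mfps_mult (L X) (mfps_prod ?PY Lt)"
  have XY_B: "X \<subseteq> B" "Y \<subseteq> B"
    using assms(1) by auto
  have "finite (X \<union> Y)"
    using assms(1) finite_B by (rule finite_subset)
  then have fin: "finite (crossing_subsets X Y)" "finite ?PY"
    by (simp_all add: finite_crossing_subsets)
  have "kill_cross X Y (L X) = L X"
    by (rule kill_cross_eq_self[where D = X]) (use L_vars[OF XY_B(1)] assms(2) in auto)
  moreover have "kill_cross X Y (Lt D) = Lt D" if "D \<in> ?PY" for D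
    by (rule kill_cross_eq_self[OF Lt_vars]) (use that XY_B assms(2) in auto)
  then have "mfps_prod ?PY (\<lambda>D. kill_cross X Y (Lt D)) = mfps_prod ?PY Lt"
    by (rule mfps_prod_cong)
  ultimately have "mfps_mult (mfps_prod (crossing_subsets X Y) (\<lambda>D. kill_cross X Y (Lt D))) ?W =
      kill_cross X Y (L (X \<union> Y))"
    by (simp add: L_eq_mult_crossing[OF assms] kill_cross_mult
        kill_cross_prod[OF fin(1)] kill_cross_prod[OF fin(2)])
  also have "\<dots> = mfps_mult (L X) (L Y)"
    by (rule L_factor) (use assms in auto)
  also have "\<dots> = mfps_mult (mfps_const (Lt {} 0)) ?W"
    by (simp add: L_eq_mult_nonempty[OF XY_B(2)] mfps_mult_scale_right mfps_mult_const_left)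
  finally show ?thesis
  proof (rule mfps_mult_right_cancel)
    show "?W 0 \<noteq> 0"
      using L_0[OF XY_B(1)] mfps_prod_Lt_0_nonzero[of ?PY] XY_B(2) by (auto simp: mfps_mult_0)
  qed
qed

lemma kill_cross_Lt_const:
  assumes "C \<subseteq> B" "X \<union> Y = C" "X \<inter> Y = {}" "X \<noteq> {}" "Y \<noteq> {}"
  shows "kill_cross X Y (Lt C) = mfps_const (Lt C 0)"
  using finite_subset[OF assms(1) finite_B] assms
proof (induction C arbitrary: X Y rule: finite_psubset_induct)
  case (psubset C)
  let ?k = "\<lambda>D. kill_cross X Y (Lt D)"
  let ?Cr = "crossing_subsets X Y"
  have fin: "finite (?Cr - {C})"
    using psubset.hyps psubset.prems(2) by (simp add: finite_crossing_subsets)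
  have smaller: "?k D = mfps_const (Lt D 0)" if "D \<in> ?Cr - {C}" for D
  proof -
    from that psubset.prems have "D \<subset> C" "D \<subseteq> B"
      by (auto simp: crossing_subsets_def)
    from \<open>D \<subseteq> B\<close> have "?k D = kill_cross (X \<inter> D) (Y \<inter> D) (Lt D)"
      by (intro kill_cross_restrict Lt_vars)
    also have "\<dots> = mfps_const (Lt D 0)"
      by (rule psubset.IH[OF \<open>D \<subset> C\<close> \<open>D \<subseteq> B\<close>])
        (use that psubset.prems in \<open>auto simp: crossing_subsets_def\<close>)
    finally show ?thesis .
  qed
  define c where "c = (\<Prod>D\<in>?Cr - {C}. Lt D 0)"
  have "c \<noteq> 0"
    using fin Lt_0_nonzero psubset.prems(1,2) by (auto simp: c_def crossing_subsets_def)
  have "insert C (?Cr - {C}) = ?Cr"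
    using psubset.prems by (auto simp: crossing_subsets_def)
  then have "mfps_const (Lt {} 0) = mfps_prod (insert C (?Cr - {C})) ?k"
    using prod_crossing_kill_cross_const[of X Y] psubset.prems(1-3) by simp
  also have "\<dots> = mfps_mult (?k C) (mfps_prod (?Cr - {C}) ?k)"
    by (rule mfps_prod_insert[OF fin]) simp
  also have "\<dots> = mfps_mult (?k C) (mfps_const c)"
    using mfps_prod_const[OF fin smaller] by (simp add: c_def)
  finally have scaled: "mfps_const (Lt {} 0) = (\<lambda>m. c * ?k C m)"
    by (simp add: mfps_mult_const_right)
  show ?case
  proof
    fix m
    show "?k C m = mfps_const (Lt C 0) m"
    proof (cases "m = 0")
      case True
      then show ?thesis
        by (simp add: kill_cross_0 mfps_const_def)
    next
      case False
      then show ?thesis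
        using fun_cong[OF scaled, of m] \<open>c \<noteq> 0\<close> by (simp add: mfps_const_def)
    qed
  qed
qed

lemma Lt_connected:
  assumes "C \<subseteq> B" "m \<noteq> 0" "Lt C m \<noteq> 0"
  shows "graph_connected C (Poly_Mapping.keys m)"
  using kill_cross_Lt_const[OF assms(1)] assms(2,3) by (rule graph_connected_if_kill_cross_const)

end

theorem lemma1:
  fixes B :: "'a set"
    and L :: "'a set \<Rightarrow> 'a mfps"
    and Lt :: "'a set \<Rightarrow> 'a mfps"
  assumes "finite B"
    and vars: "\<And>S m. S \<subseteq> B \<Longrightarrow> L S m \<noteq> 0 \<Longrightarrow> Poly_Mapping.keys m \<subseteq> pair_vars S"
    and const: "\<And>S. S \<subseteq> B \<Longrightarrow> L S 0 \<noteq> 0"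
    and tilde: "\<And>S. S \<subseteq> B \<Longrightarrow> L S = mfps_prod (Pow S) Lt"
    and factor: "\<And>S X Y. S \<subseteq> B \<Longrightarrow> X \<union> Y = S \<Longrightarrow> X \<inter> Y = {} \<Longrightarrow>
                   kill_cross X Y (L S) = mfps_mult (L X) (L Y)"
  shows "\<forall>C. C \<subseteq> B \<longrightarrow> (\<forall>m. m \<noteq> 0 \<and> Lt C m \<noteq> 0 \<longrightarrow>
           Poly_Mapping.keys m \<subseteq> pair_vars C \<and> graph_connected C (Poly_Mapping.keys m))"
proof -
  interpret factorable_family B L Lt
    by (rule factorable_family.intro) (fact assms)+
  show ?thesis
    using Lt_vars Lt_connected by blast
qed

end
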